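(* Let $K$ be a skew field, $V$ a left (topological) $K$-vector space with basis $v^0,v^1,\ldots$, $V'$ the dual right (topological) $K$-vector space with basis $p_0,p_1,\ldots$, with pairing $(\cdot,\cdot)$; let $\mathbf f\in V$, $\mathbf g\in V'$, and put $y_i^k=(v^k,p_i)$, $f_i=(\mathbf f,p_i)$, $g^k=(v^k,\mathbf g)$. Assume the matrix $D=(y_i^k)$ is generic. Then, with the difference derivatives defined as in the context: (a) $(\Delta_R^0 f)_i^k=f_i(y_i^k)^{-1}$, $(\Delta_R^1 f)_{ii'}^{kk'}=\big((\Delta_R^0 f)_i^k-(\Delta_R^0 f)_{i'}^k\big)\big((\Delta_R^0 y^{k'})_i^k-(\Delta_R^0 y^{k'})_{i'}^k\big)^{-1}$, and for $m\ge1$ $$(\Delta_R^m f)_{i_0\ldots i_m}^{k_0\ldots k_m}=\big((\Delta_R^{m-1}f)_{i_0\ldots i_{m-1}}^{k_0\ldots k_{m-1}}-(\Delta_R^{m-1}f)_{i_0\ldots i_{m-2}i_m}^{k_0\ldots k_{m-1}}\big)\big((\Delta_R^{m-1}y^{k_m})_{i_0\ldots i_{m-1}}^{k_0\ldots k_{m-1}}-(\Delta_R^{m-1}y^{k_m})_{i_0\ldots i_{m-2}i_m}^{k_0\ldots k_{m-1}}\big)^{-1}.$$ (b) $(\Delta_L^0 g)_i^k=(y_i^k)^{-1}g^k$, $(\Delta_L^1 g)_{ii'}^{kk'}=\big((\Delta_L^0 y_{i'})_i^k-(\Delta_L^0 y_{i'})_i^{k'}\big)^{-1}\big((\Delta_L^0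 g)_i^k-(\Delta_L^0 g)_i^{k'}\big)$, and for $m\ge1$ $$(\Delta_L^m g)_{i_0\ldots i_m}^{k_0\ldots k_m}=\big((\Delta_L^{m-1}y_{i_m})_{i_0\ldots i_{m-1}}^{k_0\ldots k_{m-1}}-(\Delta_L^{m-1}y_{i_m})_{i_0\ldots i_{m-1}}^{k_0\ldots k_{m-2}k_m}\big)^{-1}\big((\Delta_L^{m-1}g)_{i_0\ldots i_{m-1}}^{k_0\ldots k_{m-1}}-(\Delta_L^{m-1}g)_{i_0\ldots i_{m-1}}^{k_0\ldots k_{m-2}k_m}\big).$$
   Context: The pairing $(\cdot,\cdot):V\times V'\to K$ is biadditive with $(\lambda v,p\mu)=\lambda(v,p)\mu$. $D$ is the infinite matrix with entry $y_i^k$ in row $k$, column $i$; $y^k=(y_0^k,y_1^k,\ldots)$ is its $k$-th row and $y_i=(y_i^0,y_i^1,\ldots)$ its $i$-th column; $f=(f_i)$ and $g=(g^k)$. Difference derivatives: let $i_0,i_1,\ldots$ and $k_0,k_1,\ldots$ be permutations of $\{0,1,2,\ldots\}$. For generic $D$ there are unique upper triangular $A=(a_m^j)$ ($a_m^j=0$ for $j>m$) and lower triangular $C=(c_l^m)$ ($c_l^m=0$ for $l>m$) such that $q_m=\sum_{j=0}^m p_{i_j}a_m^j$ and $w^m=\sum_{l=0}^m c_l^m v^{k_l}$ satisfy $(w^m,q_{m'})=0$ for $m\neq m'$ and $(w^m,p_{i_m})=(v^{k_m},q_m)=1$. Equivalently, $q_m$ is the unique right linear combination of $p_{i_0},\ldots,p_{i_m}$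 with $(v^{k_l},q_m)=0$ for $l<m$ and $(v^{k_m},q_m)=1$, and $w^m$ is the unique left linear combination of $v^{k_0},\ldots,v^{k_m}$ with $(w^m,p_{i_j})=0$ for $j<m$ and $(w^m,p_{i_m})=1$; so these depend only on $i_0,\ldots,i_m,k_0,\ldots,k_m$. Define the $m$-th right and left difference derivatives $(\Delta_R^m f)_{i_0\ldots i_m}^{k_0\ldots k_m}=\sum_{j=0}^m f_{i_j}a_m^j=(\mathbf f,q_m)$ and $(\Delta_L^m g)_{i_0\ldots i_m}^{k_0\ldots k_m}=\sum_{l=0}^m c_l^m g^{k_l}=(w^m,\mathbf g)$; these notations are used for any sequences of pairwise distinct indices. The expression $\Delta_R^m y^{k}$ means $\Delta_R^m f$ with $f$ replaced by the row $y^k$ (i.e. $\mathbf f$ replaced by $v^k$), and $\Delta_L^m y_i$ means $\Delta_L^m g$ with $g$ replaced by the column $y_i$ (i.e. $\mathbf g$ replaced by $p_i$). Genericity means all finite square submatrices of $D$ and all elements of $K$ that need to be inverted are invertible. *)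

theory Defs
  imports Main
begin

text \<open>The matrix D is given by y :: nat => nat => K with y k i = y_i^k = (v^k, p_i)
  (row index k first, column index i second). f i = f_i = (f, p_i),
  g k = g^k = (v^k, g).\<close>

definition sq_invertible :: "nat \<Rightarrow> (nat \<Rightarrow> nat \<Rightarrow> 'a::division_ring) \<Rightarrow> bool" where
  "sq_invertible n M \<longleftrightarrow> (\<exists>B.
     (\<forall>a<n. \<forall>b<n. (\<Sum>c<n. M a c * B c b) = (if a = b then 1 else 0)) \<and>
     (\<forall>a<n. \<forall>b<n. (\<Sum>c<n. B a c * M c b) = (if a = b then 1 else 0)))"

definition generic :: "(nat \<Rightarrow> nat \<Rightarrow> 'a::division_ring) \<Rightarrow> bool" where
  "generic y \<longleftrightarrow> (\<forall>is ks. length is = length ks \<longrightarrow> distinct is \<longrightarrow> distinct ks \<longrightarrow>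
      sq_invertible (length is) (\<lambda>l j. y (ks ! l) (is ! j)))"

text \<open>Coefficients a_m^0..a_m^m of q_m = sum_j p_{i_j} a_m^j, characterised by
  (v^{k_l}, q_m) = sum_j y_{i_j}^{k_l} a_m^j = 0 for l < m and = 1 for l = m.\<close>
definition coeffR :: "(nat \<Rightarrow> nat \<Rightarrow> 'a::division_ring) \<Rightarrow> nat list \<Rightarrow> nat list \<Rightarrow> 'a list" where
  "coeffR y is ks = (THE a. length a = length is \<and>
     (\<forall>l<length ks. (\<Sum>j<length is. y (ks ! l) (is ! j) * a ! j)
        = (if l = length ks - 1 then 1 else 0)))"

text \<open>Coefficients c_0^m..c_m^m of w^m = sum_l c_l^m v^{k_l}, characterised by
  (w^m, p_{i_j}) = sum_l c_l^m y_{i_j}^{k_l} = 0 for j < m and = 1 for j = m.\<close>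
definition coeffL :: "(nat \<Rightarrow> nat \<Rightarrow> 'a::division_ring) \<Rightarrow> nat list \<Rightarrow> nat list \<Rightarrow> 'a list" where
  "coeffL y is ks = (THE c. length c = length ks \<and>
     (\<forall>j<length is. (\<Sum>l<length ks. c ! l * y (ks ! l) (is ! j))
        = (if j = length is - 1 then 1 else 0)))"

text \<open>Right difference derivative (Delta_R^m f)_{i_0..i_m}^{k_0..k_m} = sum_j f_{i_j} a_m^j,
  with m = length is - 1.\<close>
definition DeltaR :: "(nat \<Rightarrow> nat \<Rightarrow> 'a::division_ring) \<Rightarrow> (nat \<Rightarrow> 'a) \<Rightarrow> nat list \<Rightarrow> nat list \<Rightarrow> 'a" where
  "DeltaR y f is ks = (\<Sum>j<length is. f (is ! j) * coeffR y is ks ! j)"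

definition DeltaL :: "(nat \<Rightarrow> nat \<Rightarrow> 'a::division_ring) \<Rightarrow> (nat \<Rightarrow> 'a) \<Rightarrow> nat list \<Rightarrow> nat list \<Rightarrow> 'a" where
  "DeltaL y g is ks = (\<Sum>l<length ks. coeffL y is ks ! l * g (ks ! l))"

end

theory Submission
  imports Defs
begin

(* Let q be the right combination of p_(is0), p_i with (v^r, q) = 0 for r in ks0 and (v^k, q) = 1,
   and q' the analogous combination of p_(is0), p_(i').  Then q - q' is a combination of
   p_(is0), p_i, p_(i') orthogonal to v^r for r in ks0 and to v^k, and its pairing d with v^(k')
   is nonzero: otherwise genericity forces q - q' = 0, whereas its coefficient at p_i is the last
   coefficient of q, which is nonzero by genericity again.  Hence (q - q') d^-1 is the next
   combination q_(m+1), and pairing with f gives the recurrence for Delta_R.  The statements on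
   Delta_L are those on Delta_R for the transposed matrix over the opposite skew field. *)

lemma sq_invertible_kernel:
  fixes M :: "nat \<Rightarrow> nat \<Rightarrow> 'a::division_ring"
  assumes "sq_invertible n M" and "\<And>l. l < n \<Longrightarrow> (\<Sum>j<n. M l j * x j) = 0" and "j < n"
  shows "x j = 0"
proof -
  obtain B where B: "\<forall>a<n. \<forall>b<n. (\<Sum>c<n. B a c * M c b) = (if a = b then 1 else 0)"
    using assms(1) unfolding sq_invertible_def by blast
  have "x j = (\<Sum>c<n. (if j = c then 1 else 0) * x c)"
    using assms(3) by (simp add: if_distrib[of "\<lambda>u. u * x _"] sum.delta cong: if_cong)
  also have "\<dots> = (\<Sum>c<n. (\<Sum>d<n. B j d * M d c) * x c)"
    using B assms(3) by (intro sum.cong) auto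
  also have "\<dots> = (\<Sum>c<n. \<Sum>d<n. B j d * (M d c * x c))"
    by (simp add: sum_distrib_right mult.assoc)
  also have "\<dots> = (\<Sum>d<n. B j d * (\<Sum>c<n. M d c * x c))"
    by (subst sum.swap) (simp add: sum_distrib_left)
  also have "\<dots> = 0"
    using assms(2) by simp
  finally show ?thesis .
qed

lemma sq_invertible_solvable:
  fixes M :: "nat \<Rightarrow> nat \<Rightarrow> 'a::division_ring"
  assumes "sq_invertible n M"
  obtains x where "\<And>l. l < n \<Longrightarrow> (\<Sum>j<n. M l j * x j) = b l"
proof -
  obtain B where B: "\<forall>a<n. \<forall>b<n. (\<Sum>c<n. M a c * B c b) = (if a = b then 1 else 0)"
    using assms unfolding sq_invertible_def by blast
  have "(\<Sum>j<n. M l j * (\<Sum>c<n. B j c * b c)) = b l" if l: "l < n" for l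
  proof -
    have "(\<Sum>j<n. M l j * (\<Sum>c<n. B j c * b c)) = (\<Sum>j<n. \<Sum>c<n. M l j * B j c * b c)"
      by (simp add: sum_distrib_left mult.assoc)
    also have "\<dots> = (\<Sum>c<n. (\<Sum>j<n. M l j * B j c) * b c)"
      by (subst sum.swap) (simp add: sum_distrib_right)
    also have "\<dots> = (\<Sum>c<n. (if l = c then 1 else 0) * b c)"
      using B l by (intro sum.cong) auto
    also have "\<dots> = b l"
      using l by (simp add: if_distrib[of "\<lambda>u. u * b _"] sum.delta cong: if_cong)
    finally show ?thesis .
  qed
  then show ?thesis
    by (rule that)
qed

lemma generic_sq_invertible:
  "generic y \<Longrightarrow> distinct is \<Longrightarrow> distinct ks \<Longrightarrow> length is = length ks \<Longrightarrow>
    sq_invertible (length is) (\<lambda>l j. y (ks ! l) (is ! j))"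
  by (simp add: generic_def)

lemma generic_nonzero:
  assumes "generic y"
  shows "y k i \<noteq> 0"
proof
  assume "y k i = 0"
  have "sq_invertible 1 (\<lambda>l j. y ([k] ! l) ([i] ! j))"
    using generic_sq_invertible[OF assms, of "[i]" "[k]"] by simp
  then obtain B where "y k i * B 0 0 = 1"
    unfolding sq_invertible_def by auto
  with \<open>y k i = 0\<close> show False
    by simp
qed

(* For h i = (v, p_i), rpair h is a is the pairing of v with the right combination
   sum_j p_(is!j) a!j. *)
definition rpair :: "(nat \<Rightarrow> 'a::ring) \<Rightarrow> nat list \<Rightarrow> 'a list \<Rightarrow> 'a" where
  "rpair h is a = (\<Sum>j<length is. h (is ! j) * a ! j)"

lemma rpair_snoc:
  "length a = length is \<Longrightarrow> rpair h (is @ [i]) (a @ [c]) = rpair h is a + h i * c"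
  by (simp add: rpair_def nth_append)

lemma rpair_snoc2:
  "length a = length is \<Longrightarrow> rpair h (is @ [i, i']) (a @ [c, c']) = rpair h is a + h i * c + h i' * c'"
  using rpair_snoc[of "a @ [c]" "is @ [i]" h i' c'] by (simp add: rpair_snoc)

lemma rpair_snoc_butlast:
  "length a = Suc (length is) \<Longrightarrow> rpair h (is @ [i]) a = rpair h is (butlast a) + h i * last a"
  by (cases a rule: rev_cases) (simp_all add: rpair_snoc)

lemma rpair_map2_diff:
  "length a = length is \<Longrightarrow> length b = length is \<Longrightarrow>
    rpair h is (map2 (-) a b) = rpair h is a - rpair h is b"
  by (simp add: rpair_def right_diff_distrib sum_subtractf)

lemma rpair_map_mult:
  "length a = length is \<Longrightarrow> rpair h is (map (\<lambda>c. c * s) a) = rpair h is a * s"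
  by (simp add: rpair_def sum_distrib_right mult.assoc)

lemma rpair_eq_0: "(\<And>j. j < length is \<Longrightarrow> a ! j = 0) \<Longrightarrow> rpair h is a = 0"
  by (simp add: rpair_def)

lemma generic_rpair_kernel:
  assumes "generic y" "distinct is" "distinct ks" "length is = length ks" "length a = length is"
    and "\<And>r. r \<in> set ks \<Longrightarrow> rpair (y r) is a = 0" and "j < length is"
  shows "a ! j = 0"
proof (rule sq_invertible_kernel[where x = "nth a"])
  show "sq_invertible (length is) (\<lambda>l j. y (ks ! l) (is ! j))"
    using generic_sq_invertible assms(1-4) .
  show "(\<Sum>j<length is. y (ks ! l) (is ! j) * a ! j) = 0" if "l < length is" for l
    using assms(4,6) that unfolding rpair_def by simp
qed fact

section \<open>Right difference derivatives\<close>

definition is_coeffR :: "(nat \<Rightarrow> nat \<Rightarrow> 'a::division_ring) \<Rightarrow> nat list \<Rightarrow> nat list \<Rightarrow> 'a list \<Rightarrow> bool" where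
  "is_coeffR y is ks a \<longleftrightarrow> length a = length is \<and>
     (\<forall>l<length ks. rpair (y (ks ! l)) is a = (if l = length ks - 1 then 1 else 0))"

lemma is_coeffR_snoc_iff:
  "is_coeffR y is (ks0 @ [k]) a \<longleftrightarrow>
    length a = length is \<and> (\<forall>r\<in>set ks0. rpair (y r) is a = 0) \<and> rpair (y k) is a = 1"
proof -
  have "(\<forall>l<Suc (length ks0). rpair (y ((ks0 @ [k]) ! l)) is a = (if l = length ks0 then 1 else 0))
    \<longleftrightarrow> (\<forall>l<length ks0. rpair (y (ks0 ! l)) is a = 0) \<and> rpair (y k) is a = 1"
    by (auto simp: less_Suc_eq nth_append)
  then show ?thesis
    by (simp add: is_coeffR_def all_set_conv_all_nth)
qed

lemma coeffR_eq_iff: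
  assumes gen: "generic y" and dist: "distinct is" "distinct ks" and len: "length is = length ks"
  shows "coeffR y is ks = a \<longleftrightarrow> is_coeffR y is ks a"
proof -
  obtain x where x: "\<And>l. l < length is \<Longrightarrow>
      (\<Sum>j<length is. y (ks ! l) (is ! j) * x j) = (if l = length is - 1 then 1 else 0)"
    using generic_sq_invertible[OF gen dist len]
    by (rule sq_invertible_solvable[where b = "\<lambda>l. if l = length is - 1 then 1 else 0"]) blast
  have sol: "is_coeffR y is ks (map x [0..<length is])"
    using x len by (simp add: is_coeffR_def rpair_def)
  have uniq: "b = c" if b: "is_coeffR y is ks b" and c: "is_coeffR y is ks c" for b c
  proof (rule nth_equalityI)
    show len_bc: "length b = length c"
      using b c by (simp add: is_coeffR_def)
    have "rpair (y r) is (map2 (-) b c) = 0" if "r \<in> set ks" for r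
      using b c that by (auto simp: is_coeffR_def rpair_map2_diff in_set_conv_nth)
    then show "b ! j = c ! j" if "j < length b" for j
      using generic_rpair_kernel[OF gen dist len, of "map2 (-) b c" j] that b len_bc
      by (simp add: is_coeffR_def)
  qed
  have "coeffR y is ks = (THE a. is_coeffR y is ks a)"
    by (simp add: coeffR_def is_coeffR_def rpair_def)
  also have "\<dots> = map x [0..<length is]"
    using sol uniq by blast
  finally show ?thesis
    using sol uniq by metis
qed

lemma coeffR_snoc:
  assumes "generic y" "distinct is" "distinct (ks0 @ [k])" "length is = Suc (length ks0)"
  shows "length (coeffR y is (ks0 @ [k])) = length is"
    and "r \<in> set ks0 \<Longrightarrow> rpair (y r) is (coeffR y is (ks0 @ [k])) = 0"
    and "rpair (y k) is (coeffR y is (ks0 @ [k])) = 1"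
  using coeffR_eq_iff[OF assms(1-3), of "coeffR y is (ks0 @ [k])"] assms(4)
  by (simp_all add: is_coeffR_snoc_iff)

lemma coeffR_snoc_eqI:
  assumes "generic y" "distinct is" "distinct (ks0 @ [k])" "length is = Suc (length ks0)"
    and "length a = length is" "\<And>r. r \<in> set ks0 \<Longrightarrow> rpair (y r) is a = 0" "rpair (y k) is a = 1"
  shows "coeffR y is (ks0 @ [k]) = a"
  using coeffR_eq_iff[OF assms(1-3)] assms(4-) by (simp add: is_coeffR_snoc_iff)

lemma coeffR_last_neq_0:
  assumes gen: "generic y" and len: "length is0 = length ks0"
    and di: "distinct (is0 @ [i])" and dk: "distinct (ks0 @ [k])"
  shows "last (coeffR y (is0 @ [i]) (ks0 @ [k])) \<noteq> 0"
proof
  let ?A = "coeffR y (is0 @ [i]) (ks0 @ [k])"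
  have "length (is0 @ [i]) = Suc (length ks0)"
    using len by simp
  note A = coeffR_snoc[OF gen di dk this]
  assume last_0: "last ?A = 0"
  have len_A: "length ?A = Suc (length is0)" and len_A0: "length (butlast ?A) = length is0"
    using A(1) by simp_all
  have "rpair (y r) is0 (butlast ?A) = 0" if "r \<in> set ks0" for r
    using A(2)[OF that] len rpair_snoc_butlast[OF len_A] last_0 by simp
  then have "butlast ?A ! j = 0" if "j < length is0" for j
    using generic_rpair_kernel[OF gen _ _ len len_A0 _ that] di dk by simp
  then have "rpair (y k) is0 (butlast ?A) = 0"
    by (rule rpair_eq_0)
  with A(3) len rpair_snoc_butlast[OF len_A] last_0 show False
    by simp
qed

lemma DeltaR_eq_rpair: "DeltaR y f is ks = rpair f is (coeffR y is ks)"
  by (simp add: DeltaR_def rpair_def)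

lemma DeltaR_singleton:
  assumes "generic y"
  shows "DeltaR y f [i] [k] = f i * inverse (y k i)"
proof -
  have "coeffR y [i] ([] @ [k]) = [inverse (y k i)]"
    by (rule coeffR_snoc_eqI) (simp_all add: assms generic_nonzero rpair_def)
  then show ?thesis
    by (simp add: DeltaR_eq_rpair rpair_def)
qed

lemma rpair_merge_diff:
  fixes A A' :: "'a::ring list"
  assumes "length A = Suc (length is0)" "length A' = Suc (length is0)"
  obtains x where "length x = length (is0 @ [i, i'])" "x ! length is0 = last A"
    "\<And>h. rpair h (is0 @ [i, i']) x = rpair h (is0 @ [i]) A - rpair h (is0 @ [i']) A'"
proof
  let ?x = "map2 (-) (butlast A) (butlast A') @ [last A, - last A']"
  show "length ?x = length (is0 @ [i, i'])" "?x ! length is0 = last A"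
    using assms by (simp_all add: nth_append)
  show "rpair h (is0 @ [i, i']) ?x = rpair h (is0 @ [i]) A - rpair h (is0 @ [i']) A'" for h
    using assms by (simp add: rpair_snoc2 rpair_map2_diff rpair_snoc_butlast)
qed

lemma DeltaR_recurrence:
  assumes gen: "generic y" and len: "length is0 = length ks0"
    and di: "distinct (is0 @ [i, i'])" and dk: "distinct (ks0 @ [k, k'])"
  shows "DeltaR y f (is0 @ [i, i']) (ks0 @ [k, k']) =
    (DeltaR y f (is0 @ [i]) (ks0 @ [k]) - DeltaR y f (is0 @ [i']) (ks0 @ [k])) *
    inverse (DeltaR y (y k') (is0 @ [i]) (ks0 @ [k]) - DeltaR y (y k') (is0 @ [i']) (ks0 @ [k]))"
proof -
  let ?A = "coeffR y (is0 @ [i]) (ks0 @ [k])" and ?A' = "coeffR y (is0 @ [i']) (ks0 @ [k])"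
  have di1: "distinct (is0 @ [i])" and di2: "distinct (is0 @ [i'])" and dk1: "distinct (ks0 @ [k])"
    using di dk by auto
  have len1: "length (is0 @ [i]) = Suc (length ks0)" and len2: "length (is0 @ [i']) = Suc (length ks0)"
    using len by simp_all
  note A = coeffR_snoc[OF gen di1 dk1 len1] and A' = coeffR_snoc[OF gen di2 dk1 len2]
  obtain x where len_x: "length x = length (is0 @ [i, i'])" and x_last: "x ! length is0 = last ?A"
    and x_Delta: "\<And>h. rpair h (is0 @ [i, i']) x =
      DeltaR y h (is0 @ [i]) (ks0 @ [k]) - DeltaR y h (is0 @ [i']) (ks0 @ [k])"
    using rpair_merge_diff[of ?A is0 ?A'] A(1) A'(1) by (auto simp: DeltaR_eq_rpair)
  have orth: "rpair (y r) (is0 @ [i, i']) x = 0" if "r \<in> set (ks0 @ [k])" for r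
    using that A(2,3) A'(2,3) by (auto simp: x_Delta DeltaR_eq_rpair)
  define d where "d = rpair (y k') (is0 @ [i, i']) x"
  have "d \<noteq> 0"
  proof
    assume "d = 0"
    with orth have "rpair (y r) (is0 @ [i, i']) x = 0" if "r \<in> set (ks0 @ [k, k'])" for r
      using that by (auto simp: d_def)
    then have "x ! length is0 = 0"
      using generic_rpair_kernel[OF gen di dk] len len_x by simp
    with x_last coeffR_last_neq_0[OF gen len di1 dk1] show False
      by simp
  qed
  have "coeffR y (is0 @ [i, i']) ((ks0 @ [k]) @ [k']) = map (\<lambda>c. c * inverse d) x"
    using gen di dk len len_x orth \<open>d \<noteq> 0\<close>
    by (intro coeffR_snoc_eqI) (auto simp: rpair_map_mult d_def)
  then have "DeltaR y f (is0 @ [i, i']) (ks0 @ [k, k']) = rpair f (is0 @ [i, i']) x * inverse d"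
    using len_x by (simp add: DeltaR_eq_rpair rpair_map_mult)
  then show ?thesis
    unfolding d_def x_Delta .
qed

section \<open>Left difference derivatives via the opposite skew field\<close>

typedef 'a opposite = "UNIV :: 'a set"
  morphisms unop opp by simp

setup_lifting type_definition_opposite

instantiation opposite :: (division_ring) division_ring
begin

lift_definition zero_opposite :: "'a opposite" is 0 .
lift_definition one_opposite :: "'a opposite" is 1 .
lift_definition plus_opposite :: "'a opposite \<Rightarrow> 'a opposite \<Rightarrow> 'a opposite" is "(+)" .
lift_definition minus_opposite :: "'a opposite \<Rightarrow> 'a opposite \<Rightarrow> 'a opposite" is "(-)" .
lift_definition uminus_opposite :: "'a opposite \<Rightarrow> 'a opposite" is uminus .
lift_definition times_opposite :: "'a opposite \<Rightarrow> 'a opposite \<Rightarrow> 'a opposite" is "\<lambda>a b. b * a" .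
lift_definition inverse_opposite :: "'a opposite \<Rightarrow> 'a opposite" is inverse .
lift_definition divide_opposite :: "'a opposite \<Rightarrow> 'a opposite \<Rightarrow> 'a opposite" is "\<lambda>a b. inverse b * a" .

instance
  by standard (transfer; simp add: algebra_simps)+

end

lemmas unop_simps [simp] = zero_opposite.rep_eq one_opposite.rep_eq plus_opposite.rep_eq
  minus_opposite.rep_eq uminus_opposite.rep_eq times_opposite.rep_eq inverse_opposite.rep_eq

lemma unop_sum: "unop (\<Sum>x\<in>A. f x) = (\<Sum>x\<in>A. unop (f x))"
  by (induction A rule: infinite_finite_induct) simp_all

lemma opp_eq_iff: "opp a = b \<longleftrightarrow> a = unop b"
  by (metis opp_inverse unop_inverse UNIV_I)

lemma opp_mult: "opp (a * b) = opp b * opp a"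
  by (simp add: opp_eq_iff opp_inverse)

lemma opp_sum: "opp (\<Sum>x\<in>A. f x) = (\<Sum>x\<in>A. opp (f x))"
  by (simp add: opp_eq_iff opp_inverse unop_sum)

lemma opp_0 [simp]: "opp 0 = 0" and opp_1 [simp]: "opp 1 = 1"
  by (simp_all add: opp_eq_iff)

definition opposite_transpose :: "(nat \<Rightarrow> nat \<Rightarrow> 'a) \<Rightarrow> nat \<Rightarrow> nat \<Rightarrow> 'a opposite" where
  "opposite_transpose y r c = opp (y c r)"

lemma sq_invertible_opposite_transpose:
  fixes M :: "nat \<Rightarrow> nat \<Rightarrow> 'a::division_ring"
  assumes "sq_invertible n M"
  shows "sq_invertible n (\<lambda>a b. opp (M b a))"
proof -
  obtain B where
    "\<forall>a<n. \<forall>b<n. (\<Sum>c<n. M a c * B c b) = (if a = b then 1 else 0)"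
    "\<forall>a<n. \<forall>b<n. (\<Sum>c<n. B a c * M c b) = (if a = b then 1 else 0)"
    using assms unfolding sq_invertible_def by blast
  then show ?thesis
    unfolding sq_invertible_def
    by (intro exI[of _ "\<lambda>a b. opp (B b a)"])
      (simp flip: opp_mult opp_sum)
qed

lemma generic_opposite_transpose:
  assumes "generic y"
  shows "generic (opposite_transpose y)"
  unfolding generic_def
proof (intro allI impI)
  fix cs rs :: "nat list"
  assume "length cs = length rs" "distinct cs" "distinct rs"
  then have "sq_invertible (length cs) (\<lambda>l j. y (cs ! l) (rs ! j))"
    using generic_sq_invertible[OF assms, of rs cs] by simp
  then show "sq_invertible (length cs) (\<lambda>l j. opposite_transpose y (rs ! l) (cs ! j))"
    unfolding opposite_transpose_def by (rule sq_invertible_opposite_transpose)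
qed

lemma rpair_opposite_transpose:
  "length c = length ks \<Longrightarrow>
    rpair (opposite_transpose y r) ks (map opp c) = opp (\<Sum>l<length ks. c ! l * y (ks ! l) r)"
  by (simp add: rpair_def opposite_transpose_def opp_sum opp_mult)

lemma coeffL_eq_map_unop_coeffR:
  assumes gen: "generic y" and dist: "distinct is" "distinct ks" and len: "length is = length ks"
  shows "coeffL y is ks = map unop (coeffR (opposite_transpose y) ks is)"
proof -
  let ?C = "coeffR (opposite_transpose y) ks is"
  have "(length c = length ks \<and> (\<forall>j<length is. (\<Sum>l<length ks. c ! l * y (ks ! l) (is ! j))
      = (if j = length is - 1 then 1 else 0)))
    \<longleftrightarrow> c = map unop ?C" for c
  proof -
    have "(length c = length ks \<and> (\<forall>j<length is. (\<Sum>l<length ks. c ! l * y (ks ! l) (is ! j))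
        = (if j = length is - 1 then 1 else 0)))
      \<longleftrightarrow> is_coeffR (opposite_transpose y) ks is (map opp c)"
      by (auto simp: is_coeffR_def rpair_opposite_transpose opp_eq_iff)
    also have "\<dots> \<longleftrightarrow> ?C = map opp c"
      using coeffR_eq_iff[OF generic_opposite_transpose[OF gen] dist(2,1) len[symmetric]] by simp
    also have "\<dots> \<longleftrightarrow> c = map unop ?C"
      by (auto simp: opp_inverse unop_inverse comp_def)
    finally show ?thesis .
  qed
  then show ?thesis
    unfolding coeffL_def by simp
qed

lemma DeltaL_eq_unop_DeltaR:
  assumes gen: "generic y" and dist: "distinct is" "distinct ks" and len: "length is = length ks"
  shows "DeltaL y g is ks = unop (DeltaR (opposite_transpose y) (\<lambda>r. opp (g r)) ks is)"
proof -
  have "length (coeffR (opposite_transpose y) ks is) = length ks"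
    using coeffR_eq_iff[OF generic_opposite_transpose[OF gen] dist(2,1) len[symmetric],
        of "coeffR (opposite_transpose y) ks is"]
    by (simp add: is_coeffR_def)
  then show ?thesis
    using coeffL_eq_map_unop_coeffR[OF assms]
    by (simp add: DeltaL_def DeltaR_def unop_sum opp_inverse)
qed

lemma DeltaL_singleton:
  assumes "generic y"
  shows "DeltaL y g [i] [k] = inverse (y k i) * g k"
  using DeltaL_eq_unop_DeltaR[OF assms] DeltaR_singleton[OF generic_opposite_transpose[OF assms]]
  by (simp add: opposite_transpose_def opp_inverse)

lemma DeltaL_recurrence:
  assumes gen: "generic y" and len: "length is0 = length ks0"
    and di: "distinct (is0 @ [i, i'])" and dk: "distinct (ks0 @ [k, k'])"
  shows "DeltaL y g (is0 @ [i, i']) (ks0 @ [k, k']) =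
    inverse (DeltaL y (\<lambda>r. y r i') (is0 @ [i]) (ks0 @ [k]) - DeltaL y (\<lambda>r. y r i') (is0 @ [i]) (ks0 @ [k'])) *
    (DeltaL y g (is0 @ [i]) (ks0 @ [k]) - DeltaL y g (is0 @ [i]) (ks0 @ [k']))"
proof -
  let ?yT = "opposite_transpose y"
  have "distinct (is0 @ [i])" "distinct (ks0 @ [k])" "distinct (ks0 @ [k'])"
    using di dk by auto
  note dual = DeltaL_eq_unop_DeltaR[OF gen di dk] DeltaL_eq_unop_DeltaR[OF gen this(1,2)]
    DeltaL_eq_unop_DeltaR[OF gen this(1,3)]
  have "?yT i' = (\<lambda>r. opp (y r i'))"
    by (simp add: fun_eq_iff opposite_transpose_def)
  with DeltaR_recurrence[OF generic_opposite_transpose[OF gen] len[symmetric] dk di, of "\<lambda>r. opp (g r)"]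
  show ?thesis
    using len by (simp add: dual)
qed

theorem theorem2:
  fixes y :: "nat \<Rightarrow> nat \<Rightarrow> 'a::division_ring" and f g :: "nat \<Rightarrow> 'a"
  assumes gen: "generic y"
  shows
    "(\<forall>i k. DeltaR y f [i] [k] = f i * inverse (y k i))
   \<and> (\<forall>i i' k k'. i \<noteq> i' \<longrightarrow> k \<noteq> k' \<longrightarrow>
        DeltaR y f [i, i'] [k, k'] =
          (DeltaR y f [i] [k] - DeltaR y f [i'] [k]) *
          inverse (DeltaR y (y k') [i] [k] - DeltaR y (y k') [i'] [k]))
   \<and> (\<forall>is0 ks0 i i' k k'. length is0 = length ks0 \<longrightarrow>
        distinct (is0 @ [i, i']) \<longrightarrow> distinct (ks0 @ [k, k']) \<longrightarrow>
        DeltaR y f (is0 @ [i, i']) (ks0 @ [k, k']) =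
          (DeltaR y f (is0 @ [i]) (ks0 @ [k]) - DeltaR y f (is0 @ [i']) (ks0 @ [k])) *
          inverse (DeltaR y (y k') (is0 @ [i]) (ks0 @ [k])
                   - DeltaR y (y k') (is0 @ [i']) (ks0 @ [k])))
   \<and> (\<forall>i k. DeltaL y g [i] [k] = inverse (y k i) * g k)
   \<and> (\<forall>i i' k k'. i \<noteq> i' \<longrightarrow> k \<noteq> k' \<longrightarrow>
        DeltaL y g [i, i'] [k, k'] =
          inverse (DeltaL y (\<lambda>r. y r i') [i] [k] - DeltaL y (\<lambda>r. y r i') [i] [k']) *
          (DeltaL y g [i] [k] - DeltaL y g [i] [k']))
   \<and> (\<forall>is0 ks0 i i' k k'. length is0 = length ks0 \<longrightarrow>
        distinct (is0 @ [i, i']) \<longrightarrow> distinct (ks0 @ [k, k']) \<longrightarrow>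
        DeltaL y g (is0 @ [i, i']) (ks0 @ [k, k']) =
          inverse (DeltaL y (\<lambda>r. y r i') (is0 @ [i]) (ks0 @ [k])
                   - DeltaL y (\<lambda>r. y r i') (is0 @ [i]) (ks0 @ [k'])) *
          (DeltaL y g (is0 @ [i]) (ks0 @ [k]) - DeltaL y g (is0 @ [i]) (ks0 @ [k'])))"
  using DeltaR_recurrence[OF gen, of "[]" "[]"] DeltaL_recurrence[OF gen, of "[]" "[]"]
  by (simp add: gen DeltaR_singleton DeltaL_singleton DeltaR_recurrence DeltaL_recurrence)

end
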